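(* Let $M$ be a matroid, and suppose that $M\cong M_1\mathbin{\Box}\cdots\mathbin{\Box} M_k$ and $M\cong N_1\mathbin{\Box}\cdots\mathbin{\Box} N_r$, where all the matroids $M_i$ and $N_j$ are irreducible (and the factors in each product are taken on pairwise disjoint ground sets). Then $k=r$ and $M_i\cong N_i$ for $1\leq i\leq k$.
   Context: For a matroid $M$ on a finite set $S$ write $\rho_M$ for its rank function, $\rho(M)=\rho_M(S)$, $\nu_M(A)=|A|-\rho_M(A)$ for its nullity function, and $\lambda_M(A)=\rho(M)-\rho_M(A)$ for its rank-lack function. For matroids $M$ on $S$ and $N$ on $T$ with $S\cap T=\emptyset$, the free product $M\mathbin{\Box} N$ is the matroid on $S\cup T$ whose independent sets are those $A\subseteq S\cup T$ such that $A\cap S$ is independent in $M$ and $\lambda_M(A\cap S)\geq \nu_N(A\cap T)$. Free product is associative, so iterated free products need no parentheses. A matroid $M$ is irreducible if it is nonempty (has nonempty ground set) and every factorization of $M$ as a free product of matroids contains $M$ itself as a factor; the empty matroid is not irreducible. *)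

theory Defs
  imports Main
begin

type_synonym 'a matroid = "'a set \<times> ('a set \<Rightarrow> bool)"

definition ground :: "'a matroid \<Rightarrow> 'a set" where
  "ground M = fst M"

definition indep :: "'a matroid \<Rightarrow> 'a set \<Rightarrow> bool" where
  "indep M A = snd M A"

definition matroid :: "'a matroid \<Rightarrow> bool" where
  "matroid M \<longleftrightarrow>
     finite (ground M) \<and>
     indep M {} \<and>
     (\<forall>A. indep M A \<longrightarrow> A \<subseteq> ground M) \<and>
     (\<forall>A B. indep M A \<and> B \<subseteq> A \<longrightarrow> indep M B) \<and>
     (\<forall>A B. indep M A \<and> indep M B \<and> card A < card B \<longrightarrow>
        (\<exists>x\<in>B - A. indep M (insert x A)))"

definition rk :: "'a matroid \<Rightarrow> 'a set \<Rightarrow> nat" where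
  "rk M A = Max (card ` {B. B \<subseteq> A \<and> indep M B})"

definition nullity :: "'a matroid \<Rightarrow> 'a set \<Rightarrow> nat" where
  "nullity M A = card A - rk M A"

definition ranklack :: "'a matroid \<Rightarrow> 'a set \<Rightarrow> nat" where
  "ranklack M A = rk M (ground M) - rk M A"

text \<open>Free product (intended for matroids on disjoint ground sets).\<close>
definition free_product :: "'a matroid \<Rightarrow> 'a matroid \<Rightarrow> 'a matroid" where
  "free_product M N =
     (ground M \<union> ground N,
      \<lambda>A. A \<subseteq> ground M \<union> ground N \<and> indep M (A \<inter> ground M) \<and>
          ranklack M (A \<inter> ground M) \<ge> nullity N (A \<inter> ground N))"

definition empty_matroid :: "'a matroid" where
  "empty_matroid = ({}, \<lambda>A. A = {})"

definition free_product_list :: "'a matroid list \<Rightarrow> 'a matroid" where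
  "free_product_list Ms = foldr free_product Ms empty_matroid"

definition pairwise_disjoint_grounds :: "'a matroid list \<Rightarrow> bool" where
  "pairwise_disjoint_grounds Ms \<longleftrightarrow>
     (\<forall>i<length Ms. \<forall>j<length Ms. i \<noteq> j \<longrightarrow> ground (Ms ! i) \<inter> ground (Ms ! j) = {})"

definition irreducible_matroid :: "'a matroid \<Rightarrow> bool" where
  "irreducible_matroid M \<longleftrightarrow>
     matroid M \<and> ground M \<noteq> {} \<and>
     (\<forall>Ms. (\<forall>N\<in>set Ms. matroid N) \<and> pairwise_disjoint_grounds Ms \<and>
            free_product_list Ms = M \<longrightarrow> M \<in> set Ms)"

definition matroid_iso :: "'a matroid \<Rightarrow> 'b matroid \<Rightarrow> bool" where
  "matroid_iso M N \<longleftrightarrow>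
     (\<exists>f. bij_betw f (ground M) (ground N) \<and>
          (\<forall>A\<subseteq>ground M. indep M A \<longleftrightarrow> indep N (f ` A)))"

end

theory Submission
  imports Defs "HOL-Combinatorics.Transposition"
begin

text \<open>Say that \<open>S\<close> splits \<open>P\<close> if \<open>P = P|S \<box> P/S\<close>; in a free product \<open>A \<box> Q\<close> the ground set
  of \<open>A\<close> splits it with \<open>A\<close> and \<open>Q\<close> as restriction and contraction. Splitting sets are
  characterised by a rank condition: \<open>X\<close> is independent as soon as \<open>X \<inter> S\<close> is and
  \<open>|X| \<le> r(X \<union> S)\<close>. If \<open>S\<close> and \<open>T\<close> split \<open>P\<close> and \<open>P|S\<close>, \<open>P|T\<close> are irreducible, then
  \<open>T \<inter> S\<close> splits \<open>P|S\<close>, so \<open>S\<close> and \<open>T\<close> are equal or disjoint. If they are disjoint, the rank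
  condition forces every small subset of \<open>S\<close> to be independent, so \<open>{s}\<close> splits \<open>P|S\<close> and
  \<open>S = {s}\<close>, \<open>T = {t}\<close>; moreover \<open>s\<close> and \<open>t\<close> are then clones, so the transposition of \<open>s\<close>
  and \<open>t\<close> is an automorphism of \<open>P\<close> mapping \<open>S\<close> to \<open>T\<close>. Either way the first factors and
  the remaining products of two factorisations are isomorphic, and induction on the number
  of factors finishes the proof.\<close>

lemma matroidI:
  assumes "finite (ground P)" and "indep P {}"
    and "\<And>A. indep P A \<Longrightarrow> A \<subseteq> ground P"
    and "\<And>A B. indep P A \<Longrightarrow> B \<subseteq> A \<Longrightarrow> indep P B"
    and "\<And>A B. indep P A \<Longrightarrow> indep P B \<Longrightarrow> card A < card B \<Longrightarrow> \<exists>x\<in>B - A. indep P (insert x A)"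
  shows "matroid P"
  using assms unfolding matroid_def by blast

lemma matroid_finite_ground: "matroid P \<Longrightarrow> finite (ground P)"
  by (simp add: matroid_def)

lemma matroid_indep_empty: "matroid P \<Longrightarrow> indep P {}"
  by (simp add: matroid_def)

lemma matroid_indep_subset_ground: "matroid P \<Longrightarrow> indep P A \<Longrightarrow> A \<subseteq> ground P"
  by (simp add: matroid_def)

lemma matroid_indep_subset: "matroid P \<Longrightarrow> indep P A \<Longrightarrow> B \<subseteq> A \<Longrightarrow> indep P B"
  unfolding matroid_def by blast

lemma matroid_augment:
  "matroid P \<Longrightarrow> indep P A \<Longrightarrow> indep P B \<Longrightarrow> card A < card B \<Longrightarrow> \<exists>x\<in>B - A. indep P (insert x A)"
  unfolding matroid_def by blast

lemma matroid_indep_finite: "matroid P \<Longrightarrow> indep P A \<Longrightarrow> finite A"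
  using matroid_finite_ground matroid_indep_subset_ground finite_subset by metis

lemma matroid_eqI:
  assumes "ground M = ground N" and "\<And>A. indep M A \<longleftrightarrow> indep N A"
  shows "M = N"
  using assms by (simp add: ground_def indep_def prod_eq_iff fun_eq_iff)

lemma finite_indep_subsets: "matroid P \<Longrightarrow> finite {B. B \<subseteq> X \<and> indep P B}"
  by (rule finite_subset[of _ "Pow (ground P)"]) (auto dest: matroid_indep_subset_ground matroid_finite_ground)

lemma card_le_rk: "matroid P \<Longrightarrow> B \<subseteq> X \<Longrightarrow> indep P B \<Longrightarrow> card B \<le> rk P X"
  unfolding rk_def by (rule Max_ge) (auto intro: finite_indep_subsets)

lemma rk_attained:
  assumes "matroid P"
  obtains B where "B \<subseteq> X" "indep P B" "card B = rk P X"
proof -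
  have "card ` {B. B \<subseteq> X \<and> indep P B} \<noteq> {}"
    using matroid_indep_empty[OF assms] by blast
  then have "rk P X \<in> card ` {B. B \<subseteq> X \<and> indep P B}"
    unfolding rk_def using finite_indep_subsets[OF assms] by (intro Max_in) auto
  then show thesis using that by force
qed

lemma rk_mono:
  assumes "matroid P" and "X \<subseteq> Y"
  shows "rk P X \<le> rk P Y"
proof -
  obtain B where B: "B \<subseteq> X" "indep P B" "card B = rk P X"
    using rk_attained[OF assms(1)] .
  have "B \<subseteq> Y" using B(1) assms(2) by (rule subset_trans)
  then show ?thesis using card_le_rk[OF assms(1) _ B(2)] B(3) by metis
qed

lemma rk_le_card:
  assumes "matroid P" and "finite X"
  shows "rk P X \<le> card X"
proof -
  obtain B where B: "B \<subseteq> X" "indep P B" "card B = rk P X"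
    using rk_attained[OF assms(1)] .
  then show ?thesis using card_mono[OF assms(2) B(1)] by simp
qed

lemma rk_empty: "matroid P \<Longrightarrow> rk P {} = 0"
  using rk_le_card[of P "{}"] by simp

lemma rk_indep:
  assumes "matroid P" and "indep P X"
  shows "rk P X = card X"
  using card_le_rk[OF assms(1) order_refl assms(2)] rk_le_card[OF assms(1) matroid_indep_finite[OF assms]]
  by simp

lemma indep_if_card_le_rk:
  assumes "matroid P" and "finite X" and "card X \<le> rk P X"
  shows "indep P X"
proof -
  obtain B where "B \<subseteq> X" "indep P B" "card B = rk P X"
    using rk_attained[OF assms(1)] .
  with assms card_seteq[of X B] show ?thesis by auto
qed

lemma indep_iff_rk_eq_card:
  assumes "matroid P" and "finite X"
  shows "indep P X \<longleftrightarrow> rk P X = card X"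
  using rk_indep[OF assms(1)] indep_if_card_le_rk[OF assms] by auto

lemma basis_maximal:
  assumes "matroid P" and "B \<subseteq> C" "C \<subseteq> S" "indep P C" "card B = rk P S"
  shows "C = B"
proof -
  have "card C \<le> card B" using card_le_rk[OF assms(1) assms(3,4)] assms(5) by simp
  then show ?thesis using card_seteq[OF matroid_indep_finite[OF assms(1,4)] assms(2)] by simp
qed

lemma indep_extend_to_rk:
  assumes m: "matroid P" and I: "indep P I" "I \<subseteq> X"
  obtains J where "I \<subseteq> J" "J \<subseteq> X" "indep P J" "card J = rk P X"
proof -
  let ?F = "{J. I \<subseteq> J \<and> J \<subseteq> X \<and> indep P J}"
  have "?F \<subseteq> {J. J \<subseteq> X \<and> indep P J}" by blast
  then have fin: "finite (card ` ?F)"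
    using finite_indep_subsets[OF m, of X] finite_subset by blast
  have "I \<in> ?F" using I by simp
  then have "card ` ?F \<noteq> {}" by blast
  from Max_in[OF fin this] obtain J where J: "J \<in> ?F" "Max (card ` ?F) = card J"
    by (rule imageE) simp
  have "rk P X \<le> card J"
  proof (rule ccontr)
    assume lt: "\<not> rk P X \<le> card J"
    obtain B where B: "B \<subseteq> X" "indep P B" "card B = rk P X"
      using rk_attained[OF m] .
    obtain x where x: "x \<in> B - J" "indep P (insert x J)"
      using matroid_augment[OF m, of J B] J(1) B lt by auto
    then have "insert x J \<in> ?F" using J(1) B(1) by auto
    then have "card (insert x J) \<le> Max (card ` ?F)" by (intro Max_ge[OF fin] imageI)
    then have "card (insert x J) \<le> card J" using J(2) by simp
    then show False using x J matroid_indep_finite[OF m] by auto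
  qed
  moreover have "card J \<le> rk P X" using J(1) card_le_rk[OF m, of J X] by simp
  ultimately show thesis using that[of J] J(1) by simp
qed

lemma rk_Un_le:
  assumes m: "matroid P" and fB: "finite B"
  shows "rk P (A \<union> B) \<le> rk P A + card B"
proof -
  obtain J where J: "J \<subseteq> A \<union> B" "indep P J" "card J = rk P (A \<union> B)"
    using rk_attained[OF m] .
  have "card J \<le> card (J \<inter> A) + card (J - A)"
    using card_Un_le[of "J \<inter> A" "J - A"] by (simp add: Int_Diff_Un)
  moreover have "card (J \<inter> A) \<le> rk P A"
    using card_le_rk[OF m _ matroid_indep_subset[OF m J(2)]] by simp
  moreover have "card (J - A) \<le> card B"
    using J fB by (intro card_mono) auto
  ultimately show ?thesis using J by linarith
qed

lemma rk_Un_basis: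
  assumes m: "matroid P" and B: "B \<subseteq> S" "indep P B" "card B = rk P S"
  shows "rk P (Z \<union> B) = rk P (Z \<union> S)"
proof (rule antisym)
  show "rk P (Z \<union> B) \<le> rk P (Z \<union> S)" using B(1) by (intro rk_mono[OF m]) blast
next
  obtain J where J: "B \<subseteq> J" "J \<subseteq> Z \<union> S" "indep P J" "card J = rk P (Z \<union> S)"
    using indep_extend_to_rk[OF m B(2), of "Z \<union> S"] B(1) by auto
  have "J \<inter> S = B"
    using basis_maximal[OF m _ _ matroid_indep_subset[OF m J(3)] B(3), of "J \<inter> S"] J(1) B(1)
    by auto
  then have "J \<subseteq> Z \<union> B" using J(2) by blast
  then show "rk P (Z \<union> S) \<le> rk P (Z \<union> B)" using card_le_rk[OF m _ J(3)] J(4) by simp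
qed

lemma nullity_eq_0_iff:
  assumes "finite Y" and "indep Q {}"
  shows "nullity Q Y = 0 \<longleftrightarrow> indep Q Y"
proof -
  have fin: "finite (card ` {B. B \<subseteq> Y \<and> indep Q B})" using assms(1) by simp
  have "rk Q Y \<in> card ` {B. B \<subseteq> Y \<and> indep Q B}"
    unfolding rk_def using assms(2) by (intro Max_in[OF fin]) auto
  then obtain B where B: "B \<subseteq> Y" "indep Q B" "card B = rk Q Y" by auto
  have "indep Q Y \<Longrightarrow> card Y \<le> rk Q Y"
    unfolding rk_def using fin by (intro Max_ge) auto
  moreover have "card Y \<le> rk Q Y \<Longrightarrow> indep Q Y"
    using B card_seteq[OF assms(1) B(1)] by simp
  ultimately show ?thesis by (auto simp: nullity_def)
qed

definition restriction :: "'a matroid \<Rightarrow> 'a set \<Rightarrow> 'a matroid" where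
  "restriction P S = (S, \<lambda>A. A \<subseteq> S \<and> indep P A)"

definition contraction :: "'a matroid \<Rightarrow> 'a set \<Rightarrow> 'a matroid" where
  "contraction P S = (ground P - S, \<lambda>Y. Y \<subseteq> ground P - S \<and> rk P (Y \<union> S) = card Y + rk P S)"

lemma ground_restriction [simp]: "ground (restriction P S) = S"
  by (simp add: restriction_def ground_def)

lemma indep_restriction [simp]: "indep (restriction P S) A \<longleftrightarrow> A \<subseteq> S \<and> indep P A"
  by (simp add: restriction_def indep_def)

lemma ground_contraction [simp]: "ground (contraction P S) = ground P - S"
  by (simp add: contraction_def ground_def)

lemma indep_contraction:
  "indep (contraction P S) Y \<longleftrightarrow> Y \<subseteq> ground P - S \<and> rk P (Y \<union> S) = card Y + rk P S"
  by (simp add: contraction_def indep_def)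

lemma rk_restriction:
  assumes "X \<subseteq> S"
  shows "rk (restriction P S) X = rk P X"
proof -
  from assms have "{B. B \<subseteq> X \<and> indep (restriction P S) B} = {B. B \<subseteq> X \<and> indep P B}" by auto
  then show ?thesis by (simp add: rk_def)
qed

lemma matroid_restriction:
  assumes m: "matroid P" and S: "S \<subseteq> ground P"
  shows "matroid (restriction P S)"
proof (rule matroidI)
  show "finite (ground (restriction P S))"
    using matroid_finite_ground[OF m] S finite_subset by auto
  fix A B
  assume "indep (restriction P S) A" "indep (restriction P S) B" "card A < card B"
  then show "\<exists>x\<in>B - A. indep (restriction P S) (insert x A)"
    using matroid_augment[OF m, of A B] by auto
qed (auto intro: matroid_indep_empty[OF m] matroid_indep_subset[OF m])

lemma indep_contraction_basis:
  assumes m: "matroid P" and B: "B \<subseteq> S" "indep P B" "card B = rk P S"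
  shows "indep (contraction P S) Y \<longleftrightarrow> Y \<subseteq> ground P - S \<and> indep P (Y \<union> B)"
proof (cases "Y \<subseteq> ground P - S")
  case True
  have fY: "finite Y" using True matroid_finite_ground[OF m] finite_subset by blast
  have fB: "finite B" using matroid_indep_finite[OF m B(2)] .
  have card: "card (Y \<union> B) = card Y + card B"
    using True B(1) fY fB by (intro card_Un_disjoint) auto
  have "rk P (Y \<union> S) = card Y + rk P S \<longleftrightarrow> rk P (Y \<union> B) = card (Y \<union> B)"
    using rk_Un_basis[OF m B] card B(3) by simp
  then show ?thesis
    using True indep_iff_rk_eq_card[OF m] fY fB by (simp add: indep_contraction)
qed (simp add: indep_contraction)

lemma matroid_contraction:
  assumes m: "matroid P" and S: "S \<subseteq> ground P"
  shows "matroid (contraction P S)"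
proof -
  obtain B where B: "B \<subseteq> S" "indep P B" "card B = rk P S"
    using rk_attained[OF m] .
  note iff = indep_contraction_basis[OF m B]
  show ?thesis
  proof (rule matroidI)
    show "finite (ground (contraction P S))" using matroid_finite_ground[OF m] by simp
    show "indep (contraction P S) {}" using iff B by simp
  next
    fix A C
    assume "indep (contraction P S) A" "C \<subseteq> A"
    then show "indep (contraction P S) C"
      using iff matroid_indep_subset[OF m, of "A \<union> B" "C \<union> B"] by blast
  next
    fix A C
    assume A: "indep (contraction P S) A" and C: "indep (contraction P S) C" and lt: "card A < card C"
    have fin: "finite A" "finite C" "finite B"
      using A C iff B(2) matroid_indep_finite[OF m] by (meson finite_Un)+
    have "A \<inter> B = {}" "C \<inter> B = {}" using A C iff B(1) by blast+
    then have "card (A \<union> B) < card (C \<union> B)" using lt fin by (simp add: card_Un_disjoint)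
    then obtain x where "x \<in> (C \<union> B) - (A \<union> B)" "indep P (insert x (A \<union> B))"
      using matroid_augment[OF m, of "A \<union> B" "C \<union> B"] A C iff by blast
    then show "\<exists>x\<in>C - A. indep (contraction P S) (insert x A)"
      using A C iff by auto
  qed (use iff in auto)
qed

lemma rk_contraction:
  assumes m: "matroid P" and S: "S \<subseteq> ground P" and Y: "Y \<subseteq> ground P - S"
  shows "rk (contraction P S) Y = rk P (Y \<union> S) - rk P S"
proof (rule antisym)
  have mc: "matroid (contraction P S)" using matroid_contraction[OF m S] .
  show "rk (contraction P S) Y \<le> rk P (Y \<union> S) - rk P S"
  proof -
    obtain Y' where Y': "Y' \<subseteq> Y" "indep (contraction P S) Y'" "card Y' = rk (contraction P S) Y"
      using rk_attained[OF mc] .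
    have "rk P (Y' \<union> S) = card Y' + rk P S" using Y'(2) by (simp add: indep_contraction)
    moreover have "rk P (Y' \<union> S) \<le> rk P (Y \<union> S)" using Y'(1) by (intro rk_mono[OF m]) blast
    ultimately show ?thesis using Y'(3) by linarith
  qed
  obtain B where B: "B \<subseteq> S" "indep P B" "card B = rk P S"
    using rk_attained[OF m] .
  obtain J where J: "B \<subseteq> J" "J \<subseteq> Y \<union> B" "indep P J" "card J = rk P (Y \<union> B)"
    using indep_extend_to_rk[OF m B(2) Un_upper2[of B Y]] .
  have "J - B \<subseteq> ground P - S" "J - B \<union> B = J" using J(1,2) Y by blast+
  then have "indep (contraction P S) (J - B)"
    using indep_contraction_basis[OF m B] J(3) by simp
  moreover have "J - B \<subseteq> Y" using J(2) by blast
  ultimately have "card (J - B) \<le> rk (contraction P S) Y"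
    using card_le_rk[OF mc] by blast
  moreover have "card (J - B) = rk P (Y \<union> S) - rk P S"
    using J(1,4) B(3) rk_Un_basis[OF m B, of Y] card_Diff_subset[OF matroid_indep_finite[OF m B(2)] J(1)]
    by simp
  ultimately show "rk P (Y \<union> S) - rk P S \<le> rk (contraction P S) Y" by simp
qed

lemma ground_free_product [simp]: "ground (free_product M N) = ground M \<union> ground N"
  by (simp add: free_product_def ground_def)

lemma indep_free_product:
  "indep (free_product M N) A \<longleftrightarrow> A \<subseteq> ground M \<union> ground N \<and> indep M (A \<inter> ground M) \<and>
     nullity N (A \<inter> ground N) \<le> ranklack M (A \<inter> ground M)"
  by (simp add: free_product_def indep_def ground_def)

lemma ground_empty_matroid [simp]: "ground empty_matroid = {}"
  by (simp add: empty_matroid_def ground_def)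

lemma indep_empty_matroid [simp]: "indep empty_matroid Y \<longleftrightarrow> Y = {}"
  by (simp add: empty_matroid_def indep_def)

lemma free_product_list_simps [simp]:
  "free_product_list [] = empty_matroid"
  "free_product_list (A # Ms) = free_product A (free_product_list Ms)"
  by (simp_all add: free_product_list_def)

lemma free_product_empty_matroid:
  assumes "matroid M"
  shows "free_product M empty_matroid = M"
  by (rule matroid_eqI)
    (use matroid_indep_subset_ground[OF assms] in \<open>auto simp: indep_free_product nullity_def Int_absorb2\<close>)

lemma indep_free_product_restriction_contraction:
  assumes m: "matroid P" and S: "S \<subseteq> ground P"
  shows "indep (free_product (restriction P S) (contraction P S)) X \<longleftrightarrow>
    X \<subseteq> ground P \<and> indep P (X \<inter> S) \<and> card X \<le> rk P (X \<union> S)"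
proof (cases "X \<subseteq> ground P \<and> indep P (X \<inter> S)")
  case False
  then show ?thesis using S by (auto simp: indep_free_product)
next
  case True
  then have X: "X \<subseteq> ground P" and iX: "indep P (X \<inter> S)" by auto
  have fX: "finite X" using matroid_finite_ground[OF m] X finite_subset by blast
  have XS: "X - S \<union> S = X \<union> S" "X \<inter> (ground P - S) = X - S" "X - S \<subseteq> ground P - S"
    using X by blast+
  have ranklack: "ranklack (restriction P S) (X \<inter> S) = rk P S - card (X \<inter> S)"
    unfolding ranklack_def using rk_restriction[of _ S P] rk_indep[OF m iX] by simp
  have nullity: "nullity (contraction P S) (X - S) = card (X - S) - (rk P (X \<union> S) - rk P S)"
    unfolding nullity_def using rk_contraction[OF m S XS(3)] XS(1) by simp
  have "card (X \<inter> S) \<le> rk P S" using card_le_rk[OF m _ iX] by simp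
  moreover have "rk P S \<le> rk P (X \<union> S)" by (rule rk_mono[OF m]) blast
  moreover have "rk P (X \<union> S) \<le> rk P S + card (X - S)"
    using rk_Un_le[OF m, of "X - S" S] fX Un_commute[of S "X - S"] XS(1) by simp
  moreover have "card X = card (X \<inter> S) + card (X - S)" using fX card_Int_Diff by blast
  ultimately have "card (X - S) - (rk P (X \<union> S) - rk P S) \<le> rk P S - card (X \<inter> S)
      \<longleftrightarrow> card X \<le> rk P (X \<union> S)"
    by linarith
  then show ?thesis using X iX S XS(2) ranklack nullity by (auto simp: indep_free_product)
qed

definition free_split :: "'a matroid \<Rightarrow> 'a set \<Rightarrow> bool" where
  "free_split P S \<longleftrightarrow> free_product (restriction P S) (contraction P S) = P"

lemma free_split_subset_ground: "free_split P S \<Longrightarrow> S \<subseteq> ground P"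
  unfolding free_split_def by (metis Un_upper1 ground_free_product ground_restriction)

lemma free_split_iff:
  assumes m: "matroid P" and S: "S \<subseteq> ground P"
  shows "free_split P S \<longleftrightarrow>
    (\<forall>X\<subseteq>ground P. indep P (X \<inter> S) \<longrightarrow> card X \<le> rk P (X \<union> S) \<longrightarrow> indep P X)"
proof
  assume "free_split P S"
  then have "indep P X \<longleftrightarrow> X \<subseteq> ground P \<and> indep P (X \<inter> S) \<and> card X \<le> rk P (X \<union> S)" for X
    using indep_free_product_restriction_contraction[OF m S, of X] unfolding free_split_def by simp
  then show "\<forall>X\<subseteq>ground P. indep P (X \<inter> S) \<longrightarrow> card X \<le> rk P (X \<union> S) \<longrightarrow> indep P X"
    by blast
next
  assume split: "\<forall>X\<subseteq>ground P. indep P (X \<inter> S) \<longrightarrow> card X \<le> rk P (X \<union> S) \<longrightarrow> indep P X"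
  have "indep P X \<Longrightarrow> X \<subseteq> ground P \<and> indep P (X \<inter> S) \<and> card X \<le> rk P (X \<union> S)" for X
    by (simp add: matroid_indep_subset_ground[OF m] matroid_indep_subset[OF m _ Int_lower1]
        card_le_rk[OF m Un_upper1])
  then have "indep (free_product (restriction P S) (contraction P S)) X \<longleftrightarrow> indep P X" for X
    using split indep_free_product_restriction_contraction[OF m S, of X] by blast
  then show "free_split P S"
    unfolding free_split_def using S by (intro matroid_eqI) auto
qed

text \<open>\<open>Q\<close> is not assumed to be a matroid: it turns out to be one, being a contraction.\<close>
lemma restriction_contraction_free_product:
  assumes m: "matroid (free_product A Q)" and mA: "matroid A"
    and disj: "ground A \<inter> ground Q = {}"
    and Q: "indep Q {}" "\<And>Y. indep Q Y \<Longrightarrow> Y \<subseteq> ground Q"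
  shows "restriction (free_product A Q) (ground A) = A"
    and "contraction (free_product A Q) (ground A) = Q"
proof -
  let ?P = "free_product A Q" and ?S = "ground A"
  have indep_on_S: "indep ?P X \<longleftrightarrow> indep A X" if "X \<subseteq> ?S" for X
  proof -
    have "X \<inter> ground Q = {}" "X \<inter> ?S = X" using that disj by blast+
    then show ?thesis using that by (auto simp: indep_free_product nullity_def)
  qed
  show restr: "restriction ?P ?S = A"
    by (rule matroid_eqI) (use indep_on_S matroid_indep_subset_ground[OF mA] in auto)
  obtain B where B: "B \<subseteq> ?S" "indep ?P B" "card B = rk ?P ?S"
    using rk_attained[OF m] .
  have iAB: "indep A B" using indep_on_S B(1,2) by simp
  have "rk A ?S = rk ?P ?S" using rk_restriction[of ?S ?S ?P] restr by simp
  then have ranklack: "ranklack A B = 0"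
    unfolding ranklack_def using rk_indep[OF mA iAB] B(3) by simp
  have ground_Q: "ground ?P - ?S = ground Q" using disj by auto
  show "contraction ?P ?S = Q"
  proof (rule matroid_eqI)
    show "ground (contraction ?P ?S) = ground Q" using ground_Q by simp
    fix Y
    show "indep (contraction ?P ?S) Y \<longleftrightarrow> indep Q Y"
    proof (cases "Y \<subseteq> ground Q")
      case False
      then show ?thesis using Q(2) ground_Q by (auto simp: indep_contraction)
    next
      case True
      have fY: "finite Y"
        using True matroid_finite_ground[OF m] finite_subset[of Y "ground ?P"] by auto
      have parts: "(Y \<union> B) \<inter> ?S = B" "(Y \<union> B) \<inter> ground Q = Y" "Y \<union> B \<subseteq> ground ?P"
        using True B(1) disj by auto
      have "indep (contraction ?P ?S) Y \<longleftrightarrow> indep ?P (Y \<union> B)"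
        using indep_contraction_basis[OF m B] True ground_Q by simp
      also have "\<dots> \<longleftrightarrow> nullity Q Y = 0"
        using parts iAB ranklack by (simp add: indep_free_product del: Un_subset_iff)
      also have "\<dots> \<longleftrightarrow> indep Q Y" using nullity_eq_0_iff[OF fY Q(1)] .
      finally show ?thesis .
    qed
  qed
qed

lemma irreducible_matroid_matroid: "irreducible_matroid M \<Longrightarrow> matroid M"
  by (simp add: irreducible_matroid_def)

lemma irreducible_matroid_ground_nonempty: "irreducible_matroid M \<Longrightarrow> ground M \<noteq> {}"
  by (simp add: irreducible_matroid_def)

definition free_indecomposable :: "'a matroid \<Rightarrow> bool" where
  "free_indecomposable P \<longleftrightarrow> (\<forall>S. free_split P S \<longrightarrow> S = {} \<or> S = ground P)"

lemma free_indecomposable_if_irreducible: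
  assumes irr: "irreducible_matroid P"
  shows "free_indecomposable P"
  unfolding free_indecomposable_def
proof (intro allI impI)
  fix S
  assume split: "free_split P S"
  have m: "matroid P" using irreducible_matroid_matroid[OF irr] .
  have S: "S \<subseteq> ground P" using free_split_subset_ground[OF split] .
  let ?Ms = "[restriction P S, contraction P S]"
  have "free_product_list ?Ms = P"
    using split free_product_empty_matroid[OF matroid_contraction[OF m S]]
    by (simp add: free_split_def)
  moreover have "\<forall>N\<in>set ?Ms. matroid N"
    using matroid_restriction[OF m S] matroid_contraction[OF m S] by simp
  moreover have "pairwise_disjoint_grounds ?Ms"
    unfolding pairwise_disjoint_grounds_def
  proof (intro allI impI)
    fix i j
    assume "i < length ?Ms" "j < length ?Ms" "i \<noteq> j"
    then have "(i = 0 \<and> j = 1) \<or> (i = 1 \<and> j = 0)" by auto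
    then show "ground (?Ms ! i) \<inter> ground (?Ms ! j) = {}" by auto
  qed
  ultimately have "P \<in> set ?Ms" using irr unfolding irreducible_matroid_def by blast
  then have "P = restriction P S \<or> P = contraction P S" by simp
  then have "ground P = S \<or> ground P = ground P - S"
    by (metis ground_restriction ground_contraction)
  then show "S = {} \<or> S = ground P" using S by blast
qed

lemma free_split_restriction_Int:
  assumes m: "matroid P" and split: "free_split P A" and B: "B \<subseteq> ground P"
  shows "free_split (restriction P B) (A \<inter> B)"
proof -
  have A: "A \<subseteq> ground P" using free_split_subset_ground[OF split] .
  have "indep P X" if X: "X \<subseteq> B" and i: "indep P (X \<inter> (A \<inter> B))"
    and c: "card X \<le> rk P (X \<union> (A \<inter> B))" for X
  proof -
    have "X \<inter> (A \<inter> B) = X \<inter> A" using X by blast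
    moreover have "rk P (X \<union> (A \<inter> B)) \<le> rk P (X \<union> A)" by (rule rk_mono[OF m]) blast
    ultimately show ?thesis
      using split c i X B unfolding free_split_iff[OF m A] by force
  qed
  then show ?thesis
    using free_split_iff[OF matroid_restriction[OF m B], of "A \<inter> B"] rk_restriction[of _ B P]
    by auto
qed

lemma free_splits_eq_or_disjoint:
  assumes m: "matroid P" and split: "free_split P S" "free_split P T"
    and indecomp: "free_indecomposable (restriction P S)" "free_indecomposable (restriction P T)"
  shows "S = T \<or> S \<inter> T = {}"
proof -
  have "T \<inter> S = {} \<or> T \<inter> S = S"
    using indecomp(1) free_split_restriction_Int[OF m split(2) free_split_subset_ground[OF split(1)]]
    unfolding free_indecomposable_def by simp
  moreover have "S \<inter> T = {} \<or> S \<inter> T = T"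
    using indecomp(2) free_split_restriction_Int[OF m split(1) free_split_subset_ground[OF split(2)]]
    unfolding free_indecomposable_def by simp
  ultimately show ?thesis by blast
qed

lemma rk_lower_bound_free_split:
  assumes m: "matroid P" and split: "free_split P S" and X: "X \<subseteq> ground P"
  shows "min (rk P (X \<union> S)) (rk P (X \<inter> S) + card (X - S)) \<le> rk P X"
proof -
  let ?m = "min (rk P (X \<union> S)) (rk P (X \<inter> S) + card (X - S))"
  have S: "S \<subseteq> ground P" using free_split_subset_ground[OF split] .
  have fin: "finite (X - S)" using matroid_finite_ground[OF m] X finite_subset by blast
  obtain I where I: "I \<subseteq> X \<inter> S" "indep P I" "card I = rk P (X \<inter> S)"
    using rk_attained[OF m] .
  have "I \<subseteq> S" using I(1) by blast
  then obtain B where B: "I \<subseteq> B" "B \<subseteq> S" "indep P B" "card B = rk P S"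
    using indep_extend_to_rk[OF m I(2)] by blast
  have "B \<subseteq> X \<union> S" using B(2) by blast
  then obtain J where J: "B \<subseteq> J" "J \<subseteq> X \<union> S" "indep P J" "card J = rk P (X \<union> S)"
    using indep_extend_to_rk[OF m B(3)] by blast
  have "J \<inter> S = B"
    using basis_maximal[OF m _ _ matroid_indep_subset[OF m J(3)] B(4), of "J \<inter> S"] B(2) J(1)
    by auto
  then have J_parts: "J = (J - S) \<union> B" "card J = card (J - S) + card B"
    using card_Int_Diff[OF matroid_indep_finite[OF m J(3)], of S] by auto
  have "J - S \<subseteq> X - S" using J(2) by blast
  moreover have "card (J - S) \<le> ?m - card I"
    using J_parts(2) J(4) B(4) I(3) card_mono[OF fin \<open>J - S \<subseteq> X - S\<close>]
      rk_mono[OF m, of "X \<inter> S" S] by auto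
  moreover have "?m - card I \<le> card (X - S)" using I(3) by simp
  moreover have "card I \<le> ?m"
    using I(3) rk_mono[OF m, of "X \<inter> S" "X \<union> S"] by auto
  ultimately obtain E where E: "J - S \<subseteq> E" "E \<subseteq> X - S" "card E = ?m - card I"
    using exists_subset_between[OF _ _ _ fin] by (metis le_diff_conv2)
  txt \<open>\<open>I \<union> E\<close> is independent because adding \<open>S\<close> to it spans the basis \<open>J\<close> of \<open>X \<union> S\<close>.\<close>
  let ?Z = "I \<union> E"
  have Z: "?Z \<subseteq> X" "?Z \<inter> S = I" "I \<inter> E = {}" using I(1) E(2) by blast+
  have card_Z: "card ?Z = ?m"
    using card_Un_disjoint[OF matroid_indep_finite[OF m I(2)] finite_subset[OF E(2) fin] Z(3)]
      E(3) \<open>card I \<le> ?m\<close> by simp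
  have "J \<subseteq> ?Z \<union> S" using J_parts(1) E(1) B(2) by blast
  then have "card ?Z \<le> rk P (?Z \<union> S)"
    using card_le_rk[OF m _ J(3), of "?Z \<union> S"] J(4) card_Z by linarith
  moreover have "indep P (?Z \<inter> S)" "?Z \<subseteq> ground P" using I(2) Z(1,2) X by auto
  ultimately have "indep P ?Z" using split unfolding free_split_iff[OF m S] by blast
  then show ?thesis using card_le_rk[OF m Z(1)] card_Z by simp
qed

lemma rk_lower_bound_disjoint_free_splits:
  assumes m: "matroid P" and split: "free_split P S" "free_split P T"
    and disj: "S \<inter> T = {}" and "T \<noteq> {}" and X: "X \<subseteq> S"
  shows "min (rk P (S \<union> T)) (card X) \<le> rk P X"
proof -
  have S: "S \<subseteq> ground P" and T: "T \<subseteq> ground P"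
    using free_split_subset_ground[OF split(1)] free_split_subset_ground[OF split(2)] .
  have "X \<inter> T = {}" "X - T = X" "(X \<union> T) \<union> S = S \<union> T" "(X \<union> T) \<inter> S = X" "(X \<union> T) - S = T"
    using X disj by blast+
  then have "min (rk P (X \<union> T)) (card X) \<le> rk P X"
    and "min (rk P (S \<union> T)) (rk P X + card T) \<le> rk P (X \<union> T)"
    using rk_lower_bound_free_split[OF m split(2), of X] rk_empty[OF m]
      rk_lower_bound_free_split[OF m split(1), of "X \<union> T"] X S T by auto
  moreover have "finite T" using matroid_finite_ground[OF m] T finite_subset by blast
  then have "card T \<ge> 1" using \<open>T \<noteq> {}\<close> by (simp add: Suc_le_eq card_gt_0_iff)
  ultimately show ?thesis by (simp add: min_def split: if_splits)
qed

lemma disjoint_free_split_singleton: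
  assumes m: "matroid P" and split: "free_split P S" "free_split P T"
    and disj: "S \<inter> T = {}" and "S \<noteq> {}" "T \<noteq> {}"
    and indecomp: "free_indecomposable (restriction P S)"
  shows "\<exists>s. S = {s}"
proof -
  obtain s where s: "s \<in> S" using \<open>S \<noteq> {}\<close> by blast
  have S: "S \<subseteq> ground P" using free_split_subset_ground[OF split(1)] .
  have "indep (restriction P S) X"
    if X: "X \<subseteq> S" and c: "card X \<le> rk (restriction P S) (X \<union> {s})" for X
  proof -
    have "rk P (X \<union> {s}) \<le> rk P (S \<union> T)" using X s by (intro rk_mono[OF m]) blast
    then have "card X \<le> rk P X"
      using c rk_restriction[of "X \<union> {s}" S P] X s
        rk_lower_bound_disjoint_free_splits[OF m split disj \<open>T \<noteq> {}\<close> X] by simp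
    moreover have "finite X" using finite_subset[OF subset_trans[OF X S] matroid_finite_ground[OF m]] .
    ultimately show ?thesis using indep_if_card_le_rk[OF m] X by simp
  qed
  then have "free_split (restriction P S) {s}"
    using s by (simp add: free_split_iff[OF matroid_restriction[OF m S]])
  then have "{s} = S" using indecomp unfolding free_indecomposable_def by auto
  then show ?thesis by blast
qed

lemma rk_insert_free_split_singleton:
  assumes m: "matroid P" and split: "free_split P {t}"
    and s: "s \<in> ground P" "s \<noteq> t" and Y: "Y \<subseteq> ground P - {s, t}"
  shows "rk P (insert s Y) = min (rk P (insert s (insert t Y))) (Suc (card Y))"
proof -
  have fY: "finite Y" using matroid_finite_ground[OF m] Y finite_subset by blast
  have "s \<notin> Y" using Y by blast
  then have card_sY: "card (insert s Y) = Suc (card Y)" using fY by simp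
  have "insert s Y \<union> {t} = insert s (insert t Y)" "insert s Y \<inter> {t} = {}"
    "insert s Y - {t} = insert s Y"
    using Y s by auto
  then have "min (rk P (insert s (insert t Y))) (Suc (card Y)) \<le> rk P (insert s Y)"
    using rk_lower_bound_free_split[OF m split, of "insert s Y"] rk_empty[OF m] Y s card_sY by auto
  moreover have "rk P (insert s Y) \<le> rk P (insert s (insert t Y))" by (rule rk_mono[OF m]) blast
  moreover have "rk P (insert s Y) \<le> Suc (card Y)"
    using rk_le_card[OF m, of "insert s Y"] fY card_sY by simp
  ultimately show ?thesis by simp
qed

lemma rk_insert_swap:
  assumes m: "matroid P" and split: "free_split P {s}" "free_split P {t}"
    and Y: "Y \<subseteq> ground P - {s, t}"
  shows "rk P (insert s Y) = rk P (insert t Y)"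
proof (cases "s = t")
  case False
  have st: "s \<in> ground P" "t \<in> ground P"
    using free_split_subset_ground[OF split(1)] free_split_subset_ground[OF split(2)] by auto
  have "insert t (insert s Y) = insert s (insert t Y)" "Y \<subseteq> ground P - {t, s}" using Y by auto
  then show ?thesis
    using rk_insert_free_split_singleton[OF m split(2) st(1) False Y]
      rk_insert_free_split_singleton[OF m split(1) st(2) False[symmetric]] by simp
qed simp

lemma rk_transpose_image:
  assumes m: "matroid P" and split: "free_split P {s}" "free_split P {t}"
    and X: "X \<subseteq> ground P"
  shows "rk P (transpose s t ` X) = rk P X"
proof -
  have image: "transpose a b ` X = insert b (X - {a})" if "a \<in> X" "b \<notin> X" for a b
  proof -
    have "transpose a b ` (X - {a}) = X - {a}" using that by (intro transpose_image_eq) auto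
    moreover have "X = insert a (X - {a})" using that(1) by blast
    ultimately show ?thesis by (metis image_insert transpose_apply_first)
  qed
  consider "s \<in> X \<longleftrightarrow> t \<in> X" | "s \<in> X" "t \<notin> X" | "t \<in> X" "s \<notin> X" by blast
  then show ?thesis
  proof cases
    case 1
    then show ?thesis by simp
  next
    case 2
    then have "X = insert s (X - {s})" "X - {s} \<subseteq> ground P - {s, t}" using X by blast+
    then show ?thesis using rk_insert_swap[OF m split] image[OF 2] by metis
  next
    case 3
    then have "X = insert t (X - {t})" "X - {t} \<subseteq> ground P - {s, t}" using X by blast+
    then show ?thesis using rk_insert_swap[OF m split] image[OF 3] transpose_commute[of s t] by metis
  qed
qed

definition iso_map :: "('a \<Rightarrow> 'b) \<Rightarrow> 'a matroid \<Rightarrow> 'b matroid \<Rightarrow> bool" where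
  "iso_map f M N \<longleftrightarrow>
     bij_betw f (ground M) (ground N) \<and> (\<forall>A\<subseteq>ground M. indep M A \<longleftrightarrow> indep N (f ` A))"

lemma matroid_iso_iff_iso_map: "matroid_iso M N \<longleftrightarrow> (\<exists>f. iso_map f M N)"
  by (simp add: matroid_iso_def iso_map_def)

lemma iso_map_bij_betw: "iso_map f M N \<Longrightarrow> bij_betw f (ground M) (ground N)"
  by (simp add: iso_map_def)

lemma iso_map_image_ground: "iso_map f M N \<Longrightarrow> f ` ground M = ground N"
  by (simp add: iso_map_def bij_betw_def)

lemma iso_map_inj_on: "iso_map f M N \<Longrightarrow> inj_on f (ground M)"
  by (simp add: iso_map_def bij_betw_def)

lemma iso_map_indep: "iso_map f M N \<Longrightarrow> A \<subseteq> ground M \<Longrightarrow> indep M A \<longleftrightarrow> indep N (f ` A)"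
  by (simp add: iso_map_def)

lemma iso_map_inv:
  assumes f: "iso_map f M N"
  shows "iso_map (inv_into (ground M) f) N M"
proof -
  let ?g = "inv_into (ground M) f"
  have g: "bij_betw ?g (ground N) (ground M)"
    using bij_betw_inv_into[OF iso_map_bij_betw[OF f]] .
  have "indep N B \<longleftrightarrow> indep M (?g ` B)" if B: "B \<subseteq> ground N" for B
  proof -
    have "?g ` B \<subseteq> ground M" using B bij_betw_imp_surj_on[OF g] by blast
    moreover have "f ` ?g ` B = B" using image_inv_into_cancel[OF iso_map_image_ground[OF f] B] .
    ultimately show ?thesis using iso_map_indep[OF f] by metis
  qed
  then show ?thesis using g by (simp add: iso_map_def)
qed

lemma iso_map_comp:
  assumes f: "iso_map f M N" and g: "iso_map g N K"
  shows "iso_map (g \<circ> f) M K"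
proof -
  have "indep M A \<longleftrightarrow> indep K ((g \<circ> f) ` A)" if A: "A \<subseteq> ground M" for A
  proof -
    have "f ` A \<subseteq> ground N" using A iso_map_image_ground[OF f] by blast
    then show ?thesis using iso_map_indep[OF f A] iso_map_indep[OF g] by (simp add: image_comp)
  qed
  then show ?thesis
    using bij_betw_trans[OF iso_map_bij_betw[OF f] iso_map_bij_betw[OF g]] by (simp add: iso_map_def)
qed

lemma matroid_iso_refl: "matroid_iso M M"
proof -
  have "iso_map id M M" by (simp add: iso_map_def)
  then show ?thesis unfolding matroid_iso_iff_iso_map by blast
qed

lemma matroid_iso_sym: "matroid_iso M N \<Longrightarrow> matroid_iso N M"
  using iso_map_inv matroid_iso_iff_iso_map by metis

lemma matroid_iso_trans: "matroid_iso M N \<Longrightarrow> matroid_iso N K \<Longrightarrow> matroid_iso M K"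
  using iso_map_comp matroid_iso_iff_iso_map by metis

lemma iso_map_rk:
  assumes f: "iso_map f M N" and X: "X \<subseteq> ground M"
  shows "rk N (f ` X) = rk M X"
proof -
  have inj: "inj_on f X" using inj_on_subset[OF iso_map_inj_on[OF f] X] .
  have "{B. B \<subseteq> f ` X \<and> indep N B} = (`) f ` {B. B \<subseteq> X \<and> indep M B}"
  proof (intro equalityI subsetI)
    fix B
    assume "B \<in> {B. B \<subseteq> f ` X \<and> indep N B}"
    then have B: "B \<subseteq> f ` X" "indep N B" by auto
    have "B = f ` (X \<inter> f -` B)" using B(1) by blast
    moreover have "indep M (X \<inter> f -` B)"
      using iso_map_indep[OF f, of "X \<inter> f -` B"] X B(2) calculation by auto
    ultimately show "B \<in> (`) f ` {B. B \<subseteq> X \<and> indep M B}" by blast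
  qed (use X iso_map_indep[OF f] in auto)
  moreover have "card ` (`) f ` {B. B \<subseteq> X \<and> indep M B} = card ` {B. B \<subseteq> X \<and> indep M B}"
    unfolding image_image using card_image[OF inj_on_subset[OF inj]] by (intro image_cong) auto
  ultimately show ?thesis by (simp add: rk_def)
qed

lemma iso_map_of_rk:
  assumes M: "matroid M" and N: "matroid N" and f: "bij_betw f (ground M) (ground N)"
    and rk: "\<And>X. X \<subseteq> ground M \<Longrightarrow> rk N (f ` X) = rk M X"
  shows "iso_map f M N"
  unfolding iso_map_def
proof (intro conjI f allI impI)
  fix A
  assume A: "A \<subseteq> ground M"
  have "finite A" using finite_subset[OF A matroid_finite_ground[OF M]] .
  moreover have "card (f ` A) = card A"
    using card_image[OF inj_on_subset[OF bij_betw_imp_inj_on[OF f] A]] .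
  ultimately show "indep M A \<longleftrightarrow> indep N (f ` A)"
    using indep_iff_rk_eq_card[OF M] indep_iff_rk_eq_card[OF N] rk[OF A] by simp
qed

lemma iso_map_matroid:
  assumes M: "matroid M" and f: "iso_map f M N" and N_ground: "\<And>B. indep N B \<Longrightarrow> B \<subseteq> ground N"
  shows "matroid N"
proof -
  let ?g = "inv_into (ground M) f"
  have g: "iso_map ?g N M" using iso_map_inv[OF f] .
  have iff: "indep N B \<longleftrightarrow> B \<subseteq> ground N \<and> indep M (?g ` B)" for B
    using iso_map_indep[OF g, of B] N_ground by blast
  show ?thesis
  proof (rule matroidI)
    show "finite (ground N)"
      using matroid_finite_ground[OF M] iso_map_image_ground[OF f] finite_imageI by metis
    show "indep N {}" using iff matroid_indep_empty[OF M] by simp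
  next
    fix A B
    assume "indep N A" "B \<subseteq> A"
    then show "indep N B" using iff matroid_indep_subset[OF M, of "?g ` A" "?g ` B"] by blast
  next
    fix A B
    assume A: "indep N A" and B: "indep N B" and lt: "card A < card B"
    have AB: "A \<subseteq> ground N" "B \<subseteq> ground N" using A B N_ground by blast+
    have "card (?g ` A) = card A" "card (?g ` B) = card B"
      using AB card_image[OF inj_on_subset[OF iso_map_inj_on[OF g]]] by blast+
    then obtain x where x: "x \<in> ?g ` B - ?g ` A" "indep M (insert x (?g ` A))"
      using matroid_augment[OF M, of "?g ` A" "?g ` B"] A B lt iff by auto
    then obtain b where b: "b \<in> B" "x = ?g b" by blast
    then have "b \<in> B - A" "?g ` insert b A = insert x (?g ` A)" using x by auto
    then show "\<exists>x\<in>B - A. indep N (insert x A)" using iff x AB b(1) by auto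
  qed (use N_ground in blast)
qed

lemma iso_map_restriction:
  assumes f: "iso_map f P Q" and S: "S \<subseteq> ground P"
  shows "iso_map f (restriction P S) (restriction Q (f ` S))"
proof -
  have "bij_betw f S (f ` S)" using bij_betw_subset[OF iso_map_bij_betw[OF f] S] by simp
  moreover have "indep P A \<longleftrightarrow> indep Q (f ` A)" if "A \<subseteq> S" for A
    using iso_map_indep[OF f] that S by blast
  ultimately show ?thesis by (auto simp: iso_map_def)
qed

lemma iso_map_contraction:
  assumes f: "iso_map f P Q" and S: "S \<subseteq> ground P"
  shows "iso_map f (contraction P S) (contraction Q (f ` S))"
proof -
  have inj: "inj_on f (ground P)" using iso_map_inj_on[OF f] .
  have im: "f ` (ground P - S) = ground Q - f ` S"
    using inj_on_image_set_diff[OF inj, of "ground P" S] S iso_map_image_ground[OF f] by simp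
  have "indep (contraction P S) A \<longleftrightarrow> indep (contraction Q (f ` S)) (f ` A)"
    if A: "A \<subseteq> ground P - S" for A
  proof -
    have "rk Q (f ` A \<union> f ` S) = rk P (A \<union> S)"
      using iso_map_rk[OF f, of "A \<union> S"] A S by (auto simp: image_Un)
    moreover have "card (f ` A) = card A" using card_image[OF inj_on_subset[OF inj]] A by blast
    moreover have "f ` A \<subseteq> ground Q - f ` S" using A im by blast
    ultimately show ?thesis using A iso_map_rk[OF f S] by (simp add: indep_contraction)
  qed
  moreover have "bij_betw f (ground P - S) (ground Q - f ` S)"
    using bij_betw_subset[OF iso_map_bij_betw[OF f] _ im] by blast
  ultimately show ?thesis by (simp add: iso_map_def)
qed

lemma iso_map_free_split:
  assumes P: "matroid P" and Q: "matroid Q" and f: "iso_map f P Q" and split: "free_split P S"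
  shows "free_split Q (f ` S)"
proof -
  have S: "S \<subseteq> ground P" using free_split_subset_ground[OF split] .
  have inj: "inj_on f (ground P)" using iso_map_inj_on[OF f] .
  have "indep Q X"
    if X: "X \<subseteq> ground Q" and i: "indep Q (X \<inter> f ` S)" and c: "card X \<le> rk Q (X \<union> f ` S)" for X
  proof -
    let ?X = "ground P \<inter> f -` X"
    have "X \<subseteq> f ` ground P" using X iso_map_image_ground[OF f] by simp
    then have X_eq: "f ` ?X = X" by blast
    have sub: "?X \<subseteq> ground P" "?X \<inter> S \<subseteq> ground P" "?X \<union> S \<subseteq> ground P" using S by blast+
    have "f ` (?X \<inter> S) = X \<inter> f ` S" using inj_on_image_Int[OF inj sub(1) S] X_eq by simp
    then have "indep P (?X \<inter> S)" using iso_map_indep[OF f sub(2)] i by simp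
    moreover have "card ?X \<le> rk P (?X \<union> S)"
      using iso_map_rk[OF f sub(3)] c card_image[OF inj_on_subset[OF inj sub(1)]] X_eq
      by (simp add: image_Un)
    ultimately have "indep P ?X" using split sub(1) unfolding free_split_iff[OF P S] by blast
    then show ?thesis using iso_map_indep[OF f sub(1)] X_eq by simp
  qed
  moreover have "f ` S \<subseteq> ground Q" using S iso_map_image_ground[OF f] by blast
  ultimately show ?thesis using free_split_iff[OF Q] by blast
qed

lemma iso_map_free_indecomposable:
  assumes P: "matroid P" and Q: "matroid Q" and f: "iso_map f P Q"
    and indecomp: "free_indecomposable P"
  shows "free_indecomposable Q"
  unfolding free_indecomposable_def
proof (intro allI impI)
  fix U
  assume split: "free_split Q U"
  let ?g = "inv_into (ground P) f"
  have U: "U \<subseteq> ground Q" using free_split_subset_ground[OF split] .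
  have "free_split P (?g ` U)" using iso_map_free_split[OF Q P iso_map_inv[OF f] split] .
  then have "?g ` U = {} \<or> ?g ` U = ground P" using indecomp unfolding free_indecomposable_def by blast
  moreover have "f ` ?g ` U = U" using image_inv_into_cancel[OF iso_map_image_ground[OF f] U] .
  ultimately show "U = {} \<or> U = ground Q" using iso_map_image_ground[OF f] by auto
qed

lemma free_split_factors_iso:
  assumes m: "matroid P" and split: "free_split P S" "free_split P T"
    and nonempty: "S \<noteq> {}" "T \<noteq> {}"
    and indecomp: "free_indecomposable (restriction P S)" "free_indecomposable (restriction P T)"
  shows "matroid_iso (restriction P S) (restriction P T)"
    and "matroid_iso (contraction P S) (contraction P T)"
proof -
  have "matroid_iso (restriction P S) (restriction P T) \<and> matroid_iso (contraction P S) (contraction P T)"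
  proof (cases "S = T")
    case True
    then show ?thesis by (simp add: matroid_iso_refl)
  next
    case False
    then have disj: "S \<inter> T = {}" using free_splits_eq_or_disjoint[OF m split indecomp] by blast
    then have "T \<inter> S = {}" by blast
    obtain s t where st: "S = {s}" "T = {t}"
      using disjoint_free_split_singleton[OF m split disj nonempty indecomp(1)]
        disjoint_free_split_singleton[OF m split(2,1) \<open>T \<inter> S = {}\<close> nonempty(2,1) indecomp(2)]
      by blast
    have "s \<in> ground P" "t \<in> ground P" using st split free_split_subset_ground by blast+
    then have "iso_map (transpose s t) P P"
      using rk_transpose_image[OF m split[unfolded st]] by (intro iso_map_of_rk[OF m m]) auto
    moreover have "S \<subseteq> ground P" "transpose s t ` S = T" using st \<open>s \<in> ground P\<close> by auto
    ultimately show ?thesis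
      using iso_map_restriction iso_map_contraction matroid_iso_iff_iso_map by metis
  qed
  then show "matroid_iso (restriction P S) (restriction P T)"
    and "matroid_iso (contraction P S) (contraction P T)" by auto
qed

lemma iso_free_split_factors:
  assumes P: "matroid P" and Q: "matroid Q" and iso: "matroid_iso P Q"
    and split: "free_split P S" "free_split Q U" and nonempty: "S \<noteq> {}" "U \<noteq> {}"
    and indecomp: "free_indecomposable (restriction P S)" "free_indecomposable (restriction Q U)"
  shows "matroid_iso (restriction P S) (restriction Q U)"
    and "matroid_iso (contraction P S) (contraction Q U)"
proof -
  obtain f where f: "iso_map f Q P"
    using matroid_iso_sym[OF iso] unfolding matroid_iso_iff_iso_map by blast
  have U: "U \<subseteq> ground Q" using free_split_subset_ground[OF split(2)] .
  have iso_U: "iso_map f (restriction Q U) (restriction P (f ` U))"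
    using iso_map_restriction[OF f U] .
  have split_fU: "free_split P (f ` U)" using iso_map_free_split[OF Q P f split(2)] .
  have "free_indecomposable (restriction P (f ` U))"
    using iso_map_free_indecomposable[OF matroid_restriction[OF Q U]
        matroid_restriction[OF P free_split_subset_ground[OF split_fU]] iso_U indecomp(2)] .
  moreover have "f ` U \<noteq> {}" using nonempty(2) by simp
  ultimately have "matroid_iso (restriction P S) (restriction P (f ` U))"
    and "matroid_iso (contraction P S) (contraction P (f ` U))"
    using free_split_factors_iso[OF P split(1) split_fU nonempty(1) _ indecomp(1)] by blast+
  moreover have "matroid_iso (restriction Q U) (restriction P (f ` U))"
    and "matroid_iso (contraction Q U) (contraction P (f ` U))"
    using iso_U iso_map_contraction[OF f U] unfolding matroid_iso_iff_iso_map by blast+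
  ultimately show "matroid_iso (restriction P S) (restriction Q U)"
    and "matroid_iso (contraction P S) (contraction Q U)"
    using matroid_iso_sym matroid_iso_trans by blast+
qed

lemma ground_free_product_list: "ground (free_product_list Ms) = (\<Union>N\<in>set Ms. ground N)"
  by (induction Ms) simp_all

lemma indep_free_product_list_subset_ground:
  "indep (free_product_list Ms) Y \<Longrightarrow> Y \<subseteq> ground (free_product_list Ms)"
  by (cases Ms) (simp_all add: indep_free_product)

lemma indep_free_product_list_empty:
  "\<forall>N\<in>set Ms. matroid N \<Longrightarrow> indep (free_product_list Ms) {}"
  by (cases Ms) (simp_all add: indep_free_product nullity_def matroid_indep_empty)

lemma free_product_list_eq_Nil_iff:
  assumes "\<forall>N\<in>set Ms. irreducible_matroid N"
  shows "ground (free_product_list Ms) = {} \<longleftrightarrow> Ms = []"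
  using assms irreducible_matroid_ground_nonempty by (cases Ms) auto

lemma pairwise_disjoint_grounds_Cons:
  assumes "pairwise_disjoint_grounds (A # Ms)"
  shows "pairwise_disjoint_grounds Ms" and "ground A \<inter> ground (free_product_list Ms) = {}"
proof -
  have disj: "ground ((A # Ms) ! i) \<inter> ground ((A # Ms) ! j) = {}"
    if "i < Suc (length Ms)" "j < Suc (length Ms)" "i \<noteq> j" for i j
    using assms that unfolding pairwise_disjoint_grounds_def by simp
  show "pairwise_disjoint_grounds Ms"
    unfolding pairwise_disjoint_grounds_def
  proof (intro allI impI)
    fix i j
    assume "i < length Ms" "j < length Ms" "i \<noteq> j"
    then show "ground (Ms ! i) \<inter> ground (Ms ! j) = {}" using disj[of "Suc i" "Suc j"] by simp
  qed
  have "ground A \<inter> ground N = {}" if N: "N \<in> set Ms" for N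
  proof -
    obtain j where j: "j < length Ms" "Ms ! j = N" using N by (auto simp: in_set_conv_nth)
    then have "ground ((A # Ms) ! 0) \<inter> ground ((A # Ms) ! Suc j) = {}" by (intro disj) auto
    then show ?thesis using j(2) by simp
  qed
  then show "ground A \<inter> ground (free_product_list Ms) = {}"
    unfolding ground_free_product_list by blast
qed

lemma free_product_list_Cons_factors:
  assumes m: "matroid (free_product_list (A # Ms))" and mA: "matroid A"
    and Ms: "\<forall>N\<in>set Ms. matroid N" and disj: "pairwise_disjoint_grounds (A # Ms)"
  shows "restriction (free_product_list (A # Ms)) (ground A) = A"
    and "contraction (free_product_list (A # Ms)) (ground A) = free_product_list Ms"
    and "free_split (free_product_list (A # Ms)) (ground A)"
  using restriction_contraction_free_product[OF m[simplified] mA pairwise_disjoint_grounds_Cons(2)[OF disj]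
      indep_free_product_list_empty[OF Ms] indep_free_product_list_subset_ground]
  by (simp_all add: free_split_def)

lemma free_product_list_factors_unique:
  fixes Ms :: "'a matroid list" and Ns :: "'b matroid list"
  assumes "\<forall>X\<in>set Ms. irreducible_matroid X" and "\<forall>Y\<in>set Ns. irreducible_matroid Y"
    and "pairwise_disjoint_grounds Ms" and "pairwise_disjoint_grounds Ns"
    and "matroid (free_product_list Ms)"
    and "matroid_iso (free_product_list Ms) (free_product_list Ns)"
  shows "length Ms = length Ns \<and> (\<forall>i<length Ms. matroid_iso (Ms ! i) (Ns ! i))"
  using assms
proof (induction Ms arbitrary: Ns)
  case Nil
  obtain f where "iso_map f (free_product_list ([] :: 'a matroid list)) (free_product_list Ns)"
    using Nil.prems(6) unfolding matroid_iso_iff_iso_map by blast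
  then have "ground (free_product_list Ns) = {}" using iso_map_image_ground by fastforce
  then show ?case using free_product_list_eq_Nil_iff[OF Nil.prems(2)] by simp
next
  case (Cons A Ms)
  let ?P = "free_product_list (A # Ms)"
  have irr: "irreducible_matroid A" "\<forall>X\<in>set Ms. irreducible_matroid X"
    using Cons.prems(1) by auto
  have mA: "matroid A" and "ground A \<noteq> {}" and mMs: "\<forall>N\<in>set Ms. matroid N"
    using irr irreducible_matroid_matroid irreducible_matroid_ground_nonempty by blast+
  obtain f where "iso_map f ?P (free_product_list Ns)"
    using Cons.prems(6) unfolding matroid_iso_iff_iso_map by blast
  then have "ground (free_product_list Ns) \<noteq> {}"
    using iso_map_image_ground \<open>ground A \<noteq> {}\<close> by fastforce
  then obtain C Ns' where Ns: "Ns = C # Ns'"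
    using free_product_list_eq_Nil_iff[OF Cons.prems(2)] by (cases Ns) auto
  let ?Q = "free_product_list (C # Ns')"
  have irrC: "irreducible_matroid C" "\<forall>Y\<in>set Ns'. irreducible_matroid Y"
    using Cons.prems(2) Ns by auto
  have mC: "matroid C" and "ground C \<noteq> {}" and mNs': "\<forall>N\<in>set Ns'. matroid N"
    using irrC irreducible_matroid_matroid irreducible_matroid_ground_nonempty by blast+
  have mP: "matroid ?P" using Cons.prems(5) .
  have iso: "matroid_iso ?P ?Q" using Cons.prems(6) Ns by simp
  then obtain g where "iso_map g ?P ?Q" unfolding matroid_iso_iff_iso_map by blast
  then have mQ: "matroid ?Q"
    using iso_map_matroid[OF mP _ indep_free_product_list_subset_ground] by blast
  note P_factors = free_product_list_Cons_factors[OF mP mA mMs Cons.prems(3)]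
  note Q_factors = free_product_list_Cons_factors[OF mQ mC mNs' Cons.prems(4)[unfolded Ns]]
  have "matroid_iso A C" and iso_tails: "matroid_iso (free_product_list Ms) (free_product_list Ns')"
    using iso_free_split_factors[OF mP mQ iso P_factors(3) Q_factors(3) \<open>ground A \<noteq> {}\<close>
        \<open>ground C \<noteq> {}\<close>] free_indecomposable_if_irreducible[OF irr(1)]
      free_indecomposable_if_irreducible[OF irrC(1)] P_factors(1,2) Q_factors(1,2)
    by simp_all
  moreover have "matroid (free_product_list Ms)"
    using matroid_contraction[OF mP] P_factors(2) by fastforce
  ultimately show ?case
    using Cons.IH[OF irr(2) irrC(2) pairwise_disjoint_grounds_Cons(1)[OF Cons.prems(3)]
        pairwise_disjoint_grounds_Cons(1)[OF Cons.prems(4)[unfolded Ns]]] Ns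
    by (auto simp: less_Suc_eq_0_disj)
qed

theorem theorem6p17:
  fixes M :: "'a matroid" and Ms :: "'b matroid list" and Ns :: "'c matroid list"
  assumes "matroid M"
    and "\<forall>X\<in>set Ms. irreducible_matroid X"
    and "\<forall>Y\<in>set Ns. irreducible_matroid Y"
    and "pairwise_disjoint_grounds Ms"
    and "pairwise_disjoint_grounds Ns"
    and "matroid_iso M (free_product_list Ms)"
    and "matroid_iso M (free_product_list Ns)"
  shows "length Ms = length Ns \<and> (\<forall>i<length Ms. matroid_iso (Ms ! i) (Ns ! i))"
proof -
  obtain f where "iso_map f M (free_product_list Ms)"
    using assms(6) unfolding matroid_iso_iff_iso_map by blast
  then have "matroid (free_product_list Ms)"
    using iso_map_matroid[OF assms(1)] indep_free_product_list_subset_ground by blast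
  moreover have "matroid_iso (free_product_list Ms) (free_product_list Ns)"
    using matroid_iso_trans[OF matroid_iso_sym[OF assms(6)] assms(7)] .
  ultimately show ?thesis
    using free_product_list_factors_unique[OF assms(2-5)] by blast
qed

end
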